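(* The class of graphs whose complements are perfectly divisible is not $\chi$-bounded; that is, there is no function $f:\mathbb{N}\to\mathbb{N}$ such that $\chi(G)\le f(\omega(G))$ for every graph $G$ whose complement $\overline{G}$ is perfectly divisible.
   Context: All graphs are finite and simple; $\chi$ is chromatic number, $\omega$ clique number, $\overline{G}$ the complement of $G$. A graph is perfect if every induced subgraph $H$ satisfies $\chi(H)=\omega(H)$. A graph $G$ is perfectly divisible if for every induced subgraph $H$ of $G$, $V(H)$ can be partitioned into $A,B$ with $H[A]$ perfect and $\omega(H[B])<\omega(H)$. *)

theory Defs
  imports Main
begin

definition sgraph :: "'a set \<Rightarrow> 'a set set \<Rightarrow> bool" where
  "sgraph V E \<longleftrightarrow> finite V \<and> (\<forall>e\<in>E. e \<subseteq> V \<and> card e = 2)"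

definition induced :: "'a set set \<Rightarrow> 'a set \<Rightarrow> 'a set set" where
  "induced E A = {e\<in>E. e \<subseteq> A}"

definition complement :: "'a set \<Rightarrow> 'a set set \<Rightarrow> 'a set set" where
  "complement V E = {e. e \<subseteq> V \<and> card e = 2 \<and> e \<notin> E}"

definition is_clique :: "'a set \<Rightarrow> 'a set set \<Rightarrow> 'a set \<Rightarrow> bool" where
  "is_clique V E K \<longleftrightarrow> K \<subseteq> V \<and> (\<forall>x\<in>K. \<forall>y\<in>K. x \<noteq> y \<longrightarrow> {x, y} \<in> E)"

definition clique_num :: "'a set \<Rightarrow> 'a set set \<Rightarrow> nat" where
  "clique_num V E = Max {card K | K. is_clique V E K}"

definition is_coloring :: "'a set \<Rightarrow> 'a set set \<Rightarrow> nat \<Rightarrow> ('a \<Rightarrow> nat) \<Rightarrow> bool" where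
  "is_coloring V E k c \<longleftrightarrow> (\<forall>v\<in>V. c v < k) \<and>
     (\<forall>x\<in>V. \<forall>y\<in>V. {x, y} \<in> E \<longrightarrow> c x \<noteq> c y)"

definition chromatic_num :: "'a set \<Rightarrow> 'a set set \<Rightarrow> nat" where
  "chromatic_num V E = (LEAST k. \<exists>c. is_coloring V E k c)"

definition perfect :: "'a set \<Rightarrow> 'a set set \<Rightarrow> bool" where
  "perfect V E \<longleftrightarrow> (\<forall>A\<subseteq>V. chromatic_num A (induced E A) = clique_num A (induced E A))"

definition perfectly_divisible :: "'a set \<Rightarrow> 'a set set \<Rightarrow> bool" where
  "perfectly_divisible V E \<longleftrightarrow>
     (\<forall>H\<subseteq>V. H \<noteq> {} \<longrightarrow>
        (\<exists>A B. A \<union> B = H \<and> A \<inter> B = {} \<and> perfect A (induced E A) \<and>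
               clique_num B (induced E B) < clique_num H (induced E H)))"

end

theory Submission
  imports Defs "HOL-Library.Nat_Bijection"
begin

text \<open>Complements of triangle-free graphs are perfectly divisible: given a vertex v of an
  induced subgraph H, split H into the closed neighbourhood A of v and the rest B. In the
  complement, A is a clique (a stable set of the triangle-free graph) plus the isolated vertex v,
  hence perfect, while v is complete to B, so the clique number drops on B. The shift graphs on
  the pairs i < j < n, with (i, j) adjacent to (j, k), are triangle-free but need at least
  log n colours, so no function of the clique number bounds the chromatic number.\<close>

lemma finite_clique_sizes: "finite V \<Longrightarrow> finite {card K | K. is_clique V E K}"
  by (rule finite_subset[of _ "card ` Pow V"]) (auto simp: is_clique_def)

lemma clique_num_attained:
  assumes "finite V"
  obtains K where "is_clique V E K" "card K = clique_num V E"
proof -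
  have "is_clique V E {}" by (simp add: is_clique_def)
  then have "clique_num V E \<in> {card K | K. is_clique V E K}"
    unfolding clique_num_def using finite_clique_sizes[OF assms] by (intro Max_in) auto
  then obtain K where "is_clique V E K" "clique_num V E = card K" by blast
  then show ?thesis using that by simp
qed

lemma card_le_clique_num: "finite V \<Longrightarrow> is_clique V E K \<Longrightarrow> card K \<le> clique_num V E"
  unfolding clique_num_def using finite_clique_sizes by (intro Max_ge) auto

lemma clique_num_leI:
  "finite V \<Longrightarrow> (\<And>K. is_clique V E K \<Longrightarrow> card K \<le> m) \<Longrightarrow> clique_num V E \<le> m"
  by (metis clique_num_attained)

lemma chromatic_num_le: "is_coloring V E k c \<Longrightarrow> chromatic_num V E \<le> k"
  unfolding chromatic_num_def by (rule Least_le) blast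

lemma chromatic_num_coloring:
  assumes "finite V" "\<And>x. {x} \<notin> E"
  obtains c where "is_coloring V E (chromatic_num V E) c"
proof -
  obtain h where h: "bij_betw h V {0..<card V}"
    using ex_bij_betw_finite_nat[OF assms(1)] by blast
  have "is_coloring V E (card V) h"
    unfolding is_coloring_def
  proof (intro conjI ballI impI)
    fix v assume "v \<in> V" then show "h v < card V" using h bij_betwE by fastforce
  next
    fix x y assume "x \<in> V" "y \<in> V" "{x, y} \<in> E"
    moreover have "x \<noteq> y" using \<open>{x, y} \<in> E\<close> assms(2) by auto
    ultimately show "h x \<noteq> h y" using h by (metis bij_betw_iff_bijections)
  qed
  then have "\<exists>k c. is_coloring V E k c" by blast
  then have "\<exists>c. is_coloring V E (chromatic_num V E) c"
    unfolding chromatic_num_def by (rule LeastI_ex)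
  then show ?thesis using that by blast
qed

lemma card_clique_le_colors:
  assumes "is_clique V E K" "is_coloring V E k c" "finite K"
  shows "card K \<le> k"
proof -
  have "inj_on c K" using assms(1,2) unfolding inj_on_def is_clique_def is_coloring_def by blast
  moreover have "c ` K \<subseteq> {..<k}"
    using assms(1,2) unfolding is_clique_def is_coloring_def by auto
  ultimately
  show ?thesis by (metis card_image card_lessThan card_mono finite_lessThan)
qed

lemma clique_num_le_chromatic_num:
  assumes "finite V" "\<And>x. {x} \<notin> E"
  shows "clique_num V E \<le> chromatic_num V E"
proof -
  obtain K where K: "is_clique V E K" "card K = clique_num V E"
    using clique_num_attained[OF assms(1)] .
  obtain c where "is_coloring V E (chromatic_num V E) c"
    using chromatic_num_coloring[OF assms] .
  moreover have "finite K" using K(1) assms(1) finite_subset unfolding is_clique_def by blast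
  ultimately show ?thesis using card_clique_le_colors K by metis
qed

lemma induced_iff: "e \<in> induced E A \<longleftrightarrow> e \<in> E \<and> e \<subseteq> A"
  unfolding induced_def by auto

lemma doubleton_in_complement_iff:
  "{x, y} \<in> complement V E \<longleftrightarrow> x \<in> V \<and> y \<in> V \<and> x \<noteq> y \<and> {x, y} \<notin> E"
  unfolding complement_def by (auto simp: card_2_iff)

lemma singleton_notin_complement: "{x} \<notin> complement V E"
  unfolding complement_def by auto

lemma chromatic_num_le_clique_num_if_edges_in_clique:
  assumes "finite V" "\<And>x. {x} \<notin> E" "is_clique V E W" "\<forall>e\<in>E. e \<subseteq> W"
  shows "chromatic_num V E \<le> clique_num V E"
proof (cases "V = {}")
  case True
  then have "is_coloring V E 0 (\<lambda>_. 0)" by (simp add: is_coloring_def)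
  then show ?thesis using chromatic_num_le by fastforce
next
  case False
  then obtain w where "w \<in> V" by blast
  then have "is_clique V E {w}" by (simp add: is_clique_def)
  then have "1 \<le> clique_num V E" using card_le_clique_num[OF assms(1)] by fastforce
  moreover have W: "W \<subseteq> V" "finite W"
    using assms(1,3) finite_subset unfolding is_clique_def by auto
  moreover have "card W \<le> clique_num V E" using card_le_clique_num[OF assms(1,3)] .
  moreover obtain h where h: "bij_betw h W {0..<card W}"
    using ex_bij_betw_finite_nat[OF \<open>finite W\<close>] by blast
  have "is_coloring V E (max 1 (card W)) (\<lambda>u. if u \<in> W then h u else 0)"
    unfolding is_coloring_def
  proof (intro conjI ballI impI)
    fix u show "(if u \<in> W then h u else 0) < max 1 (card W)"
      using h bij_betwE by fastforce
  next
    fix x y assume "{x, y} \<in> E"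
    then have "x \<in> W" "y \<in> W" "x \<noteq> y" using assms(2,4) by auto
    then show "(if x \<in> W then h x else 0) \<noteq> (if y \<in> W then h y else 0)"
      using h by (metis bij_betw_iff_bijections)
  qed
  ultimately show ?thesis using chromatic_num_le by (metis max.bounded_iff order_trans)
qed

lemma perfect_if_edges_in_clique:
  assumes "finite V" "\<And>x. {x} \<notin> E" "is_clique V E W" "\<forall>e\<in>E. e \<subseteq> W"
  shows "perfect V E"
  unfolding perfect_def
proof (intro allI impI antisym)
  fix A assume "A \<subseteq> V"
  then have fin: "finite A" using assms(1) finite_subset by blast
  have "is_clique A (induced E A) (W \<inter> A)" "\<forall>e\<in>induced E A. e \<subseteq> W \<inter> A"
    using assms(3,4) by (auto simp: is_clique_def induced_iff)
  then show "chromatic_num A (induced E A) \<le> clique_num A (induced E A)"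
    using assms(2) fin
    by (intro chromatic_num_le_clique_num_if_edges_in_clique[where W = "W \<inter> A"])
      (auto simp: induced_iff)
  show "clique_num A (induced E A) \<le> chromatic_num A (induced E A)"
    using assms(2) fin by (intro clique_num_le_chromatic_num) (auto simp: induced_iff)
qed

lemma clique_num_induced_less_if_complete_to:
  assumes "finite H" "B \<subseteq> H" "v \<in> H - B" "\<And>u. u \<in> B \<Longrightarrow> {u, v} \<in> E"
  shows "clique_num B (induced E B) < clique_num H (induced E H)"
proof -
  have "finite B" using assms(1,2) finite_subset by blast
  then obtain K where K: "is_clique B (induced E B) K" "card K = clique_num B (induced E B)"
    by (rule clique_num_attained)
  have KB: "K \<subseteq> B" using K(1) by (simp add: is_clique_def)
  have "is_clique H (induced E H) (insert v K)"
    unfolding is_clique_def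
  proof (intro conjI ballI impI)
    show "insert v K \<subseteq> H" using KB assms(2,3) by auto
    fix x y assume "x \<in> insert v K" "y \<in> insert v K" "x \<noteq> y"
    moreover have "{x, y} \<in> E" if "x \<in> K" "y \<in> K" "x \<noteq> y" for x y
      using K(1) that by (auto simp: is_clique_def induced_iff)
    ultimately have "{x, y} \<in> E"
      using KB assms(4)[of x] assms(4)[of y] by (auto simp: insert_commute)
    then show "{x, y} \<in> induced E H"
      using \<open>x \<in> insert v K\<close> \<open>y \<in> insert v K\<close> KB assms(2,3)
      by (auto simp: induced_iff)
  qed
  then have "card (insert v K) \<le> clique_num H (induced E H)"
    using card_le_clique_num[OF assms(1)] by blast
  moreover have "finite K" using KB \<open>finite B\<close> finite_subset by blast
  moreover have "v \<notin> K" using KB assms(3) by blast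
  ultimately show ?thesis using K(2) by simp
qed

definition triangle_free :: "'a set set \<Rightarrow> bool" where
  "triangle_free E \<longleftrightarrow> (\<nexists>x y z. {x, y} \<in> E \<and> {y, z} \<in> E \<and> {x, z} \<in> E)"

lemma perfect_complement_closed_neighbourhood:
  assumes "sgraph V E" "triangle_free E" "H \<subseteq> V" "v \<in> H"
  defines "A \<equiv> insert v {u \<in> H. {u, v} \<in> E}"
  shows "perfect A (induced (complement V E) A)"
proof (rule perfect_if_edges_in_clique[where W = "A - {v}"])
  have "A \<subseteq> V" using assms(3,4) by (auto simp: A_def)
  then show "finite A" using assms(1) finite_subset by (auto simp: sgraph_def)
  show "{x} \<notin> induced (complement V E) A" for x
    by (simp add: induced_iff singleton_notin_complement)
  show "is_clique A (induced (complement V E) A) (A - {v})"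
    unfolding is_clique_def
  proof (intro conjI ballI impI)
    fix x y assume "x \<in> A - {v}" "y \<in> A - {v}" "x \<noteq> y"
    then have "{x, v} \<in> E" "{v, y} \<in> E" "x \<in> V" "y \<in> V"
      using assms(3) by (auto simp: A_def insert_commute)
    then have "{x, y} \<notin> E" using assms(2) by (auto simp: triangle_free_def)
    then show "{x, y} \<in> induced (complement V E) A"
      using \<open>x \<in> V\<close> \<open>y \<in> V\<close> \<open>x \<noteq> y\<close> \<open>x \<in> A - {v}\<close> \<open>y \<in> A - {v}\<close>
      by (simp add: induced_iff doubleton_in_complement_iff)
  qed auto
  show "\<forall>e\<in>induced (complement V E) A. e \<subseteq> A - {v}"
  proof
    fix e assume "e \<in> induced (complement V E) A"
    then obtain x y where "e = {x, y}" "x \<noteq> y" "x \<in> A" "y \<in> A" "{x, y} \<notin> E"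
      by (auto simp: induced_iff complement_def card_2_iff)
    then show "e \<subseteq> A - {v}" by (auto simp: A_def insert_commute)
  qed
qed

lemma perfectly_divisible_complement_if_triangle_free:
  assumes "sgraph V E" "triangle_free E"
  shows "perfectly_divisible V (complement V E)"
  unfolding perfectly_divisible_def
proof (intro allI impI)
  fix H assume "H \<subseteq> V" "H \<noteq> {}"
  then obtain v where "v \<in> H" by blast
  define A where "A \<equiv> insert v {u \<in> H. {u, v} \<in> E}"
  have "perfect A (induced (complement V E) A)" unfolding A_def
    by (rule perfect_complement_closed_neighbourhood[OF assms \<open>H \<subseteq> V\<close> \<open>v \<in> H\<close>])
  moreover have "clique_num (H - A) (induced (complement V E) (H - A))
      < clique_num H (induced (complement V E) H)"
  proof (rule clique_num_induced_less_if_complete_to)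
    show "finite H" using \<open>H \<subseteq> V\<close> assms(1) finite_subset by (auto simp: sgraph_def)
    show "{u, v} \<in> complement V E" if "u \<in> H - A" for u
      using that \<open>H \<subseteq> V\<close> \<open>v \<in> H\<close> by (auto simp: A_def doubleton_in_complement_iff)
  qed (auto simp: A_def \<open>v \<in> H\<close>)
  moreover have "A \<union> (H - A) = H" "A \<inter> (H - A) = {}" using \<open>v \<in> H\<close> by (auto simp: A_def)
  ultimately show "\<exists>A B. A \<union> B = H \<and> A \<inter> B = {} \<and> perfect A (induced (complement V E) A) \<and>
      clique_num B (induced (complement V E) B) < clique_num H (induced (complement V E) H)"
    by blast
qed

lemma singleton_notin_edges: "sgraph V E \<Longrightarrow> {x} \<notin> E"
  unfolding sgraph_def by fastforce

lemma clique_num_le_2_if_triangle_free: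
  assumes "finite V" "triangle_free E"
  shows "clique_num V E \<le> 2"
proof (rule clique_num_leI[OF assms(1)], rule ccontr)
  fix K assume K: "is_clique V E K" and "\<not> card K \<le> 2"
  moreover have "finite K" using K assms(1) finite_subset unfolding is_clique_def by blast
  ultimately obtain T where "T \<subseteq> K" "card T = 3"
    using obtain_subset_with_card_n[of 3 K] by auto
  then obtain x y z where "x \<in> K" "y \<in> K" "z \<in> K" "x \<noteq> y" "y \<noteq> z" "x \<noteq> z"
    by (auto simp: card_3_iff)
  then have "{x, y} \<in> E" "{y, z} \<in> E" "{x, z} \<in> E" using K by (auto simp: is_clique_def)
  then show False using assms(2) by (auto simp: triangle_free_def)
qed

text \<open>The vertices (i, j) of the shift graph are encoded as the natural numbers
  prod_encode (i, j), since the theorem speaks about graphs on nat.\<close>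

definition shift_vertices :: "nat \<Rightarrow> nat set" where
  "shift_vertices n = prod_encode ` {(i, j). i < j \<and> j < n}"

definition shift_edges :: "nat \<Rightarrow> nat set set" where
  "shift_edges n = {{prod_encode (i, j), prod_encode (j, k)} | i j k. i < j \<and> j < k \<and> k < n}"

lemma sgraph_shift: "sgraph (shift_vertices n) (shift_edges n)"
  unfolding sgraph_def
proof (rule conjI)
  have "{(i, j). i < j \<and> j < n} \<subseteq> {..<n} \<times> {..<n}" by auto
  then show "finite (shift_vertices n)"
    unfolding shift_vertices_def by (meson finite_SigmaI finite_imageI finite_lessThan finite_subset)
  show "\<forall>e\<in>shift_edges n. e \<subseteq> shift_vertices n \<and> card e = 2"
  proof
    fix e assume "e \<in> shift_edges n"
    then obtain i j k where "e = {prod_encode (i, j), prod_encode (j, k)}" "i < j" "j < k" "k < n"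
      unfolding shift_edges_def by blast
    moreover have "prod_encode (i, j) \<noteq> prod_encode (j, k)"
      using \<open>i < j\<close> by (metis less_irrefl prod_encode_eq prod.inject)
    ultimately show "e \<subseteq> shift_vertices n \<and> card e = 2"
      unfolding shift_vertices_def by auto
  qed
qed

lemma shift_edge_decode:
  assumes "{x, y} \<in> shift_edges n"
  defines "s \<equiv> \<lambda>v. fst (prod_decode v)" and "t \<equiv> \<lambda>v. snd (prod_decode v)"
  shows "s x < t x \<and> s y < t y \<and> (t x = s y \<or> t y = s x)"
proof -
  obtain i j k where "{x, y} = {prod_encode (i, j), prod_encode (j, k)}" "i < j" "j < k"
    using assms(1) unfolding shift_edges_def by blast
  then show ?thesis by (auto simp: doubleton_eq_iff s_def t_def)
qed

lemma triangle_free_shift: "triangle_free (shift_edges n)"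
  unfolding triangle_free_def
proof clarify
  fix x y z
  assume "{x, y} \<in> shift_edges n" "{y, z} \<in> shift_edges n" "{x, z} \<in> shift_edges n"
  then show False using shift_edge_decode[of x y n] shift_edge_decode[of y z n]
      shift_edge_decode[of x z n] by auto
qed

text \<open>For i < i' the colour of (i, i')
  lies in S i but not in S i', as (i, i') is adjacent to every (i', j); so S embeds the n
  indices into the subsets of the k colours.\<close>

lemma shift_colors_exponential:
  assumes c: "is_coloring (shift_vertices n) (shift_edges n) k c"
  shows "n \<le> 2 ^ k"
proof -
  define S where "S i = {c (prod_encode (i, j)) | j. i < j \<and> j < n}" for i
  have vertex: "prod_encode (i, j) \<in> shift_vertices n" if "i < j" "j < n" for i j
    using that by (auto simp: shift_vertices_def)
  have S_distinct: "S i \<noteq> S i'" if "i < i'" "i' < n" for i i'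
  proof
    assume "S i = S i'"
    moreover have "c (prod_encode (i, i')) \<in> S i" using that by (auto simp: S_def)
    ultimately obtain j where j: "i' < j" "j < n" "c (prod_encode (i', j)) = c (prod_encode (i, i'))"
      by (auto simp: S_def)
    have "{prod_encode (i, i'), prod_encode (i', j)} \<in> shift_edges n"
      using that j unfolding shift_edges_def by blast
    then have "c (prod_encode (i, i')) \<noteq> c (prod_encode (i', j))"
      using c vertex[OF that] vertex[OF j(1,2)] unfolding is_coloring_def by blast
    then show False using j(3) by simp
  qed
  have "inj_on S {..<n}"
  proof (rule inj_onI)
    fix i i' assume "i \<in> {..<n}" "i' \<in> {..<n}" "S i = S i'"
    then show "i = i'" using S_distinct by (metis lessThan_iff linorder_neqE_nat)
  qed
  moreover have "S ` {..<n} \<subseteq> Pow {..<k}"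
    using c vertex unfolding is_coloring_def S_def by auto
  ultimately have "card {..<n} \<le> card (Pow {..<k})"
    by (metis card_image card_mono finite_Pow_iff finite_lessThan)
  then show ?thesis by (simp add: card_Pow)
qed

theorem mainTheorem20:
  shows "\<not> (\<exists>f :: nat \<Rightarrow> nat. \<forall>(V :: nat set) E.
            sgraph V E \<and> perfectly_divisible V (complement V E) \<longrightarrow>
            chromatic_num V E \<le> f (clique_num V E))"
proof
  assume "\<exists>f :: nat \<Rightarrow> nat. \<forall>(V :: nat set) E.
            sgraph V E \<and> perfectly_divisible V (complement V E) \<longrightarrow>
            chromatic_num V E \<le> f (clique_num V E)"
  then obtain f :: "nat \<Rightarrow> nat" where f: "\<And>(V :: nat set) E.
            sgraph V E \<Longrightarrow> perfectly_divisible V (complement V E) \<Longrightarrow>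
            chromatic_num V E \<le> f (clique_num V E)" by blast
  define n where "n = Suc (2 ^ (f 0 + f 1 + f 2))"
  let ?V = "shift_vertices n" and ?E = "shift_edges n"
  have finite: "finite ?V" using sgraph_shift by (simp add: sgraph_def)
  have "chromatic_num ?V ?E \<le> f (clique_num ?V ?E)"
    using f sgraph_shift perfectly_divisible_complement_if_triangle_free triangle_free_shift
    by blast
  also have "\<dots> \<le> f 0 + f 1 + f 2"
    using clique_num_le_2_if_triangle_free[OF finite triangle_free_shift[of n]]
    by (auto simp: le_Suc_eq numeral_2_eq_2)
  finally have "2 ^ chromatic_num ?V ?E \<le> (2::nat) ^ (f 0 + f 1 + f 2)"
    by (rule power_increasing) simp
  moreover obtain c where "is_coloring ?V ?E (chromatic_num ?V ?E) c"
    using chromatic_num_coloring[OF finite singleton_notin_edges[OF sgraph_shift]] .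
  ultimately have "n \<le> 2 ^ (f 0 + f 1 + f 2)"
    using shift_colors_exponential order_trans by blast
  then show False by (simp add: n_def)
qed

end
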